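(* Let $f(z)=-2\ln(1+e^{-z/2})$ and, for an integer $k\geq0$ and real $x$, $$H_k(x)=\int_0^{\infty}\mathrm{d}\ell\;\ell^{2k+1}\big(f(\ell+x)-f(\ell-x)\big).$$ Then $H_k$ is an odd polynomial of degree $2k+3$, given by $$H_k(x)=(2k+1)!\sum_{i=0}^{k+1}\theta_{i-1}\,\frac{x^{2k+3-2i}}{(2k+3-2i)!},$$ where $\theta_m=\zeta(2m+2)\,(2^{2m+3}-4)$ for $m\geq-1$ (in particular $\theta_{-1}=1$).
   Context: $\zeta$ denotes the Riemann zeta function, with $\zeta(0)=-\tfrac12$. *)

theory Defs
  imports "HOL-Analysis.Analysis"
begin

text \<open>Riemann zeta function, only needed at s = 0 (value -1/2, as fixed in the
context) and at real s > 1, where it is the Dirichlet series.\<close>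
definition zeta :: "real \<Rightarrow> real" where
  "zeta s = (if s = 0 then - 1 / 2 else (\<Sum>n. 1 / (real (Suc n)) powr s))"

definition f :: "real \<Rightarrow> real" where
  "f z = - 2 * ln (1 + exp (- z / 2))"

definition theta :: "int \<Rightarrow> real" where
  "theta m = zeta (2 * of_int m + 2) * (2 powr (2 * of_int m + 3) - 4)"

definition H :: "nat \<Rightarrow> real \<Rightarrow> real" where
  "H k x = integral {0..} (\<lambda>l. l ^ (2 * k + 1) * (f (l + x) - f (l - x)))"

end

theory Submission
  imports Defs
begin

(* Expanding f(u) = -2 ln(1 + exp(-u/2)) as a power series in exp(-u/2) and integrating
   termwise against the Gamma integral gives the moments
     int_0^oo u^m f(u) du = -2^(m+2) m! eta(m+2),
   where eta(s) = (1 - 2^(1-s)) zeta(s) is the Dirichlet eta function.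
   For x >= 0 substitute u = l + x and u = l - x.  The only piece with a negative argument,
   the integral of l^p f(l - x) over [0, x], is reflected using f(-z) = f(z) - z; the
   correction int_0^x l^p (l - x) dl is the leading term of the polynomial (theta_(-1) = 1).
   Everything else combines into binomial sums of moments in which, for odd p, only the
   even moments survive, and these are the theta_r.  Both sides are odd in x. *)

lemma has_integral_affine_substitution:
  fixes g :: "real \<Rightarrow> real"
  assumes m: "m \<noteq> 0" and S: "S \<in> sets lebesgue"
    and g: "g absolutely_integrable_on (\<lambda>l. m * l + c) ` S"
  shows "((\<lambda>l. g (m * l + c)) has_integral integral ((\<lambda>l. m * l + c) ` S) g / \<bar>m\<bar>) S"
proof -
  have "(\<lambda>l. \<bar>m\<bar> * g (m * l + c)) absolutely_integrable_on S \<and>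
        integral S (\<lambda>l. \<bar>m\<bar> * g (m * l + c)) = integral ((\<lambda>l. m * l + c) ` S) g"
    using g by (subst has_absolute_integral_change_of_variables_1'[OF S])
      (use m in \<open>auto intro!: derivative_eq_intros simp: inj_on_def\<close>)
  then have "(\<lambda>l. g (m * l + c)) absolutely_integrable_on S"
    and "integral S (\<lambda>l. g (m * l + c)) = integral ((\<lambda>l. m * l + c) ` S) g / \<bar>m\<bar>"
    using m by (auto simp: set_integrable_mult_right_iff field_simps)
  then show ?thesis
    by (metis has_integral_integral set_lebesgue_integral_eq_integral(1))
qed

lemma has_integral_shift_atLeast:
  fixes g :: "real \<Rightarrow> real"
  assumes "g absolutely_integrable_on {a..}"
  shows "((\<lambda>l. g (l + c)) has_integral integral {a..} g) {a - c..}"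
proof -
  have "(\<lambda>l. 1 * l + c) ` {a - c..} = {a..}"
    using image_add_atLeast[of c "a - c"] by (simp add: add.commute)
  then show ?thesis
    using has_integral_affine_substitution[where m = 1 and S = "{a - c..}" and g = g and c = c] assms by simp
qed

lemma has_integral_Icc_atLeast_Un:
  fixes g :: "real \<Rightarrow> 'b::banach"
  assumes "(g has_integral I) {a..x}" "(g has_integral J) {x..}" "a \<le> x"
  shows "(g has_integral I + J) {a..}"
proof -
  have "(g has_integral I + J) ({a..x} \<union> {x..})"
    using assms by (intro has_integral_Un) (auto intro: negligible_subset[of "{x}"])
  moreover have "{a..x} \<union> {x..} = {a..}" using \<open>a \<le> x\<close> by auto
  ultimately show ?thesis by simp
qed

lemma integral_atLeast_split:
  fixes g :: "real \<Rightarrow> real"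
  assumes g: "g absolutely_integrable_on {a..}" and x: "a \<le> x"
  shows "integral {x..} g = integral {a..} g - integral {a..x} g"
proof -
  have "g absolutely_integrable_on {a..x}" "g absolutely_integrable_on {x..}"
    using x by (auto intro: set_integrable_subset[OF g])
  then have "(g has_integral integral {a..x} g + integral {x..} g) {a..}"
    by (intro has_integral_Icc_atLeast_Un[OF _ _ x] integrable_integral
        set_lebesgue_integral_eq_integral(1))
  then show ?thesis by (simp add: integral_unique)
qed

lemma has_integral_reflect_interval:
  fixes g :: "real \<Rightarrow> 'b::real_normed_vector"
  assumes "(g has_integral I) {a..b}"
  shows "((\<lambda>l. g (a + b - l)) has_integral I) {a..b}"
  using has_integral_shift_real_ivl[of "\<lambda>l. g (- l)" I "- b" "- a" "- (a + b)"] assms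
  by (simp add: algebra_simps)

lemma has_integral_suminf:
  fixes F :: "nat \<Rightarrow> 'a::euclidean_space \<Rightarrow> real"
  assumes int: "\<And>i. F i absolutely_integrable_on S"
    and N: "negligible N"
    and sums: "\<And>x. x \<in> S - N \<Longrightarrow> (\<lambda>i. F i x) sums g x"
    and abs_summable: "\<And>x. x \<in> S - N \<Longrightarrow> summable (\<lambda>i. \<bar>F i x\<bar>)"
    and summable_integrals: "summable (\<lambda>i. integral S (\<lambda>x. \<bar>F i x\<bar>))"
  shows "g absolutely_integrable_on S"
    and "(g has_integral (\<Sum>i. integral S (F i))) S"
proof -
  define G where "G = (\<lambda>i x. indicator S x * F i x)"
  have G_int: "integrable lebesgue (G i)" for i
    using int[of i] by (simp add: set_integrable_def G_def)
  have "AE x in lebesgue. x \<notin> N"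
    using N unfolding eventually_ae_filter_negligible by blast
  then have G_summable: "AE x in lebesgue. summable (\<lambda>i. norm (G i x))"
  proof eventually_elim
    case (elim x)
    then show ?case
      using abs_summable[of x] by (cases "x \<in> S") (auto simp: G_def)
  qed
  have G_norm: "(\<integral>x. norm (G i x) \<partial>lebesgue) = integral S (\<lambda>x. \<bar>F i x\<bar>)" for i
  proof -
    have "(\<lambda>x. \<bar>F i x\<bar>) absolutely_integrable_on S"
      using int[of i] by (rule set_integrable_abs)
    then show ?thesis
      by (simp add: G_def abs_mult set_lebesgue_integral_def flip: set_lebesgue_integral_eq_integral(2))
  qed
  have G_integral: "(\<integral>x. G i x \<partial>lebesgue) = integral S (F i)" for i
    using set_lebesgue_integral_eq_integral(2)[OF int[of i]]
    by (simp add: G_def set_lebesgue_integral_def)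
  have sum_G: "(\<Sum>i. G i x) = indicator S x * (\<Sum>i. F i x)" for x
    by (cases "x \<in> S") (simp_all add: G_def)
  have "summable (\<lambda>i. \<integral>x. norm (G i x) \<partial>lebesgue)"
    using summable_integrals by (simp only: G_norm)
  note G_suminf = integrable_suminf[OF G_int G_summable this] sums_integral[OF G_int G_summable this]
  from G_suminf have SA: "(\<lambda>x. \<Sum>i. F i x) absolutely_integrable_on S"
    and SI: "(\<lambda>i. integral S (F i)) sums integral S (\<lambda>x. \<Sum>i. F i x)"
    by (simp_all add: sum_G G_integral set_integrable_def set_lebesgue_integral_def
        flip: set_lebesgue_integral_eq_integral(2))
  have g_eq: "g x = (\<Sum>i. F i x)" if "x \<in> S - N" for x
    using sums[OF that] by (simp add: sums_iff)
  show gA: "g absolutely_integrable_on S"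
    by (rule absolutely_integrable_spike[OF SA N g_eq])
  have "integral S g = integral S (\<lambda>x. \<Sum>i. F i x)"
    by (rule integral_spike[OF N]) (simp add: g_eq)
  with SI have "integral S g = (\<Sum>i. integral S (F i))"
    by (simp add: sums_iff)
  then show "(g has_integral (\<Sum>i. integral S (F i))) S"
    using gA by (metis has_integral_integral set_lebesgue_integral_eq_integral(1))
qed

lemma image_mult_atLeast0:
  fixes c :: real assumes "c > 0" shows "(\<lambda>l. c * l) ` {0..} = {0..}"
proof (intro equalityI subsetI)
  fix t :: real assume "t \<in> {0..}"
  then have "t = c * (t / c)" "t / c \<in> {0..}" using assms by auto
  then show "t \<in> (\<lambda>l. c * l) ` {0..}" by blast
qed (use assms in auto)

lemma has_integral_pow_mult_exp_neg:
  fixes c :: real assumes c: "c > 0"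
  shows "((\<lambda>u. u ^ m * exp (- (c * u))) has_integral fact m / c ^ (m + 1)) {0..}"
proof -
  define g where "g t = t ^ m * exp (- t)" for t :: real
  have "Gamma (real m + 1) = fact m"
    using Gamma_fact[of m] by (simp add: add.commute)
  then have "((\<lambda>t. t powr real m / exp t) has_integral fact m) {0..}"
    using Gamma_integral_real[of "real m + 1"] by simp
  then have gI: "(g has_integral fact m) {0..}"
  proof (rule has_integral_spike[of "{0}", rotated 2])
    fix t :: real assume "t \<in> {0..} - {0}"
    then show "g t = t powr real m / exp t"
      by (simp add: g_def powr_realpow exp_minus divide_inverse)
  qed simp
  then have "g absolutely_integrable_on {0..}"
    by (intro nonnegative_absolutely_integrable_1) (auto simp: g_def)
  then have "((\<lambda>l. g (c * l + 0)) has_integral integral {0..} g / c) {0..}"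
    using has_integral_affine_substitution[where m = c and S = "{0..}" and g = g and c = 0] c
    by (simp add: image_mult_atLeast0)
  then have "((\<lambda>l. inverse (c ^ m) * g (c * l)) has_integral inverse (c ^ m) * (fact m / c)) {0..}"
    using integral_unique[OF gI] by (intro has_integral_mult_right) simp
  then show ?thesis
    using c by (simp add: g_def power_mult_distrib field_simps)
qed

lemma has_integral_pow_mult_diff:
  fixes x :: real assumes "0 \<le> x"
  shows "((\<lambda>l. l ^ p * (l - x)) has_integral - (x ^ (p + 2) / ((real p + 1) * (real p + 2)))) {0..x}"
proof -
  define F where "F l = l ^ (p + 2) / real (p + 2) - x * l ^ (p + 1) / real (p + 1)" for l
  have "((\<lambda>l. l ^ p * (l - x)) has_integral F x - F 0) {0..x}"
  proof (rule fundamental_theorem_of_calculus[OF assms])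
    fix l assume "l \<in> {0..x}"
    have "(F has_real_derivative l ^ p * (l - x)) (at l within {0..x})"
      unfolding F_def by (rule derivative_eq_intros refl | simp)+ (simp add: algebra_simps)
    then show "(F has_vector_derivative l ^ p * (l - x)) (at l within {0..x})"
      by (simp add: has_real_derivative_iff_has_vector_derivative)
  qed
  moreover have "F x - F 0 = - (x ^ (p + 2) / ((real p + 1) * (real p + 2)))"
    by (simp add: F_def field_simps)
  ultimately show ?thesis by simp
qed

lemma summable_inverse_Suc_power:
  assumes "s \<ge> 2" shows "summable (\<lambda>i. 1 / real (i + 1) ^ s)"
proof -
  have "summable (\<lambda>n. 1 / real n ^ s)"
    using inverse_power_summable[OF assms] by (simp add: inverse_eq_divide)
  then show ?thesis
    using summable_Suc_iff[of "\<lambda>n. 1 / real n ^ s"] by simp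
qed

definition eta :: "nat \<Rightarrow> real" where
  "eta s = (\<Sum>i. (-1) ^ i / real (i + 1) ^ s)"

lemma eta_sums:
  assumes "s \<ge> 2" shows "(\<lambda>i. (-1) ^ i / real (i + 1) ^ s) sums eta s"
proof -
  have "summable (\<lambda>i. (-1) ^ i / real (i + 1) ^ s)"
    by (rule summable_norm_cancel) (use summable_inverse_Suc_power[OF assms] in simp)
  then show ?thesis by (simp add: eta_def summable_sums)
qed

lemma eta_eq_zeta:
  assumes s: "s \<ge> 2"
  shows "eta s = (1 - 2 / 2 ^ s) * zeta (real s)"
proof -
  define z where "z = (\<lambda>n. 1 / real (n + 1) ^ s)"
  have "summable z"
    unfolding z_def by (rule summable_inverse_Suc_power[OF s])
  then have zs: "z sums zeta (real s)"
    using s by (simp add: zeta_def z_def powr_realpow summable_sums)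
  define w where "w n = (if odd n then z n else 0)" for n
  have "(\<lambda>j. w (2 * j + 1)) = (\<lambda>j. z j / 2 ^ s)"
  proof
    fix j :: nat
    have e: "real (2 * j + 1 + 1) = real (j + 1) * 2" by simp
    show "w (2 * j + 1) = z j / 2 ^ s"
      by (simp only: w_def z_def e) (simp add: power_mult_distrib[symmetric] distrib_right)
  qed
  then have "(\<lambda>j. w (2 * j + 1)) sums (zeta (real s) / 2 ^ s)"
    using sums_divide[OF zs] by simp
  then have ws: "w sums (zeta (real s) / 2 ^ s)"
  proof (subst (asm) sums_mono_reindex)
    show "strict_mono (\<lambda>j::nat. 2 * j + 1)" by (rule strict_monoI) simp
    fix n :: nat assume "n \<notin> range (\<lambda>j. 2 * j + 1)"
    then show "w n = 0" unfolding w_def by (auto elim!: oddE)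
  qed
  \<comment> \<open>The alternating series is the full series minus twice its even-denominator part.\<close>
  have "(\<lambda>n. z n - 2 * w n) sums (zeta (real s) - 2 * (zeta (real s) / 2 ^ s))"
    by (intro sums_diff sums_mult ws zs)
  moreover have "(\<lambda>n. z n - 2 * w n) = (\<lambda>n. (-1) ^ n / real (n + 1) ^ s)"
    by (rule ext) (auto simp: w_def z_def)
  ultimately show ?thesis
    unfolding eta_def by (simp add: sums_iff algebra_simps)
qed

lemma theta_minus_one: "theta (-1) = 1"
  by (simp add: theta_def zeta_def)

lemma theta_of_nat: "theta (int r) = 2 ^ (2 * r + 3) * eta (2 * r + 2)"
proof -
  have "2 ^ (2 * r + 3) * eta (2 * r + 2)
      = 2 ^ (2 * r + 3) * (1 - 2 / 2 ^ (2 * r + 2)) * zeta (real (2 * r + 2))"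
    using eta_eq_zeta[of "2 * r + 2"] by simp
  also have "\<dots> = zeta (real (2 * r + 2)) * (2 ^ (2 * r + 3) - 4)"
    by (simp add: power_add field_simps)
  also have "\<dots> = theta (int r)"
    by (simp add: theta_def powr_realpow[symmetric] add_ac)
  finally show ?thesis ..
qed

lemma f_uminus: "f (- z) = f z - z"
proof -
  have "1 + exp (z / 2) = exp (z / 2) * (1 + exp (- z / 2))"
    by (simp add: field_simps exp_minus)
  moreover have "0 < 1 + exp (- z / 2)" by (simp add: add_pos_pos)
  ultimately have "ln (1 + exp (z / 2)) = z / 2 + ln (1 + exp (- z / 2))"
    by (simp add: ln_mult)
  then show ?thesis by (simp add: f_def)
qed

lemma continuous_on_f: "continuous_on S f"
proof -
  have "1 + exp z \<noteq> (0::real)" for z using exp_gt_zero[of z] by linarith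
  then show ?thesis unfolding f_def by (intro continuous_intros) auto
qed

lemma f_sums:
  fixes u :: real assumes "u > 0"
  shows "(\<lambda>i. - 2 * (-1) ^ i / real (i + 1) * exp (- u / 2) ^ (i + 1)) sums f u"
proof -
  define y where "y = exp (- u / 2)"
  have "\<bar>y\<bar> < 1" using assms by (simp add: y_def)
  then have "(\<lambda>n. - ((- y) ^ n) / of_nat n) sums ln (1 + y)"
    by (rule ln_series')
  then have "(\<lambda>i. - ((- y) ^ Suc i) / of_nat (Suc i)) sums ln (1 + y)"
    by (subst sums_Suc_iff) simp
  from sums_mult[OF this, of "- 2"] show ?thesis
    by (simp add: f_def y_def power_minus' mult_ac)
qed

lemma has_integral_pow_mult_exp_half_power:
  "((\<lambda>u. u ^ m * exp (- u / 2) ^ (i + 1)) has_integral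
      2 ^ (m + 1) * fact m / real (i + 1) ^ (m + 1)) {0..}"
proof -
  have e: "exp (- (real (i + 1) / 2 * u)) = exp (- u / 2) ^ (i + 1)" for u
    using exp_of_nat_mult[of "i + 1" "- u / 2"] by simp
  have "((\<lambda>u. u ^ m * exp (- (real (i + 1) / 2 * u))) has_integral
      2 ^ (m + 1) * fact m / real (i + 1) ^ (m + 1)) {0..}"
    using has_integral_pow_mult_exp_neg[of "real (i + 1) / 2" m] by (simp add: power_divide mult_ac)
  then show ?thesis by (simp only: e)
qed

lemma summable_exp_half_power_div:
  fixes u :: real assumes "u > 0"
  shows "summable (\<lambda>i. exp (- u / 2) ^ (i + 1) / real (i + 1))"
proof (rule summable_comparison_test)
  show "\<exists>N. \<forall>i\<ge>N. norm (exp (- u / 2) ^ (i + 1) / real (i + 1)) \<le> exp (- u / 2) ^ (i + 1)"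
    by (auto simp: field_simps)
  show "summable (\<lambda>i. exp (- u / 2) ^ (i + 1))"
    using assms by (subst summable_Suc_iff[symmetric, simplified]) (simp add: summable_geometric)
qed

lemma has_integral_pow_mult_f:
  shows "(\<lambda>u. u ^ m * f u) absolutely_integrable_on {0..}"
    and "((\<lambda>u. u ^ m * f u) has_integral - (2 ^ (m + 2) * fact m * eta (m + 2))) {0..}"
proof -
  define F where "F = (\<lambda>i u. - 2 * (-1) ^ i / real (i + 1) * (u ^ m * exp (- u / 2) ^ (i + 1)))"
  note moment = has_integral_pow_mult_exp_half_power[of m]
  have F_int: "F i absolutely_integrable_on {0..}" for i
    unfolding F_def using moment[of i]
    by (intro set_integrable_mult_right nonnegative_absolutely_integrable_1) auto
  have "(F i has_integral - (2 ^ (m + 2) * fact m) * ((-1) ^ i / real (i + 1) ^ (m + 2))) {0..}" for i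
    using has_integral_mult_right[OF moment, of "- 2 * (-1) ^ i / real (i + 1)" i]
    by (simp add: F_def field_simps)
  then have F_integral:
      "integral {0..} (F i) = - (2 ^ (m + 2) * fact m) * ((-1) ^ i / real (i + 1) ^ (m + 2))" for i
    by (rule integral_unique)
  have "((\<lambda>u. 2 / real (i + 1) * (u ^ m * exp (- u / 2) ^ (i + 1))) has_integral
      2 ^ (m + 2) * fact m * (1 / real (i + 1) ^ (m + 2))) {0..}" for i
    using has_integral_mult_right[OF moment, of "2 / real (i + 1)" i] by (simp add: field_simps)
  then have F_abs: "((\<lambda>u. \<bar>F i u\<bar>) has_integral
      2 ^ (m + 2) * fact m * (1 / real (i + 1) ^ (m + 2))) {0..}" for i
    by (rule has_integral_eq[rotated]) (simp add: F_def abs_mult power_abs)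
  have integrals_summable: "summable (\<lambda>i. integral {0..} (\<lambda>u. \<bar>F i u\<bar>))"
    unfolding integral_unique[OF F_abs] by (intro summable_mult summable_inverse_Suc_power) simp
  have pointwise_sums: "(\<lambda>i. F i u) sums (u ^ m * f u)" if "u \<in> {0..} - {0}" for u
    using sums_mult[OF f_sums, of u "u ^ m"] that by (simp add: F_def mult_ac)
  have pointwise_summable: "summable (\<lambda>i. \<bar>F i u\<bar>)" if "u \<in> {0..} - {0}" for u
    using summable_mult[OF summable_exp_half_power_div, of u "2 * u ^ m"] that
    by (simp add: F_def abs_mult power_abs mult_ac)
  note termwise = has_integral_suminf[where F = F and S = "{0..}" and N = "{0}",
      OF F_int negligible_sing pointwise_sums pointwise_summable integrals_summable]
  then show "(\<lambda>u. u ^ m * f u) absolutely_integrable_on {0..}" by blast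
  have "(\<lambda>i. integral {0..} (F i)) sums (- (2 ^ (m + 2) * fact m) * eta (m + 2))"
    unfolding F_integral by (intro sums_mult eta_sums) simp
  with termwise(2) show "((\<lambda>u. u ^ m * f u) has_integral - (2 ^ (m + 2) * fact m * eta (m + 2))) {0..}"
    by (simp add: sums_iff)
qed

lemma has_integral_binomial_mult_f:
  shows "(\<lambda>u. (u + a) ^ p * f u) absolutely_integrable_on {0..}"
    and "((\<lambda>u. (u + a) ^ p * f u) has_integral
           (\<Sum>j\<le>p. of_nat (p choose j) * a ^ (p - j) * integral {0..} (\<lambda>u. u ^ j * f u))) {0..}"
proof -
  have expand: "(\<lambda>u. (u + a) ^ p * f u)
      = (\<lambda>u. \<Sum>j\<le>p. of_nat (p choose j) * a ^ (p - j) * (u ^ j * f u))"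
    by (simp add: binomial_ring sum_distrib_left sum_distrib_right mult_ac)
  show "(\<lambda>u. (u + a) ^ p * f u) absolutely_integrable_on {0..}"
    unfolding expand
    by (intro absolutely_integrable_sum set_integrable_mult_right has_integral_pow_mult_f(1)) simp
  show "((\<lambda>u. (u + a) ^ p * f u) has_integral
           (\<Sum>j\<le>p. of_nat (p choose j) * a ^ (p - j) * integral {0..} (\<lambda>u. u ^ j * f u))) {0..}"
    unfolding expand
    by (intro has_integral_sum has_integral_mult_right integrable_integral
        set_lebesgue_integral_eq_integral(1) has_integral_pow_mult_f(1)) simp
qed

lemma has_integral_odd_pow_mult_f_diff:
  fixes x :: real
  assumes p: "odd p" and x: "0 \<le> x"
  defines "Q \<equiv> \<lambda>u. (u + - x) ^ p * f u" and "R \<equiv> \<lambda>u. (u + x) ^ p * f u"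
  shows "((\<lambda>l. l ^ p * (f (l + x) - f (l - x))) has_integral
           integral {0..} Q - integral {0..} R + x ^ (p + 2) / ((real p + 1) * (real p + 2))) {0..}"
proof -
  have QA: "Q absolutely_integrable_on {0..}" and RA: "R absolutely_integrable_on {0..}"
    unfolding Q_def R_def by (fact has_integral_binomial_mult_f(1))+
  define JQ where "JQ = integral {0..x} Q"
  have "((\<lambda>l. Q (l + x)) has_integral integral {x..} Q) {x - x..}"
    using set_integrable_subset[OF QA, of "{x..}"] x by (intro has_integral_shift_atLeast) auto
  then have plus: "((\<lambda>l. l ^ p * f (l + x)) has_integral integral {0..} Q - JQ) {0..}"
    using integral_atLeast_split[OF QA x] by (simp add: Q_def JQ_def)
  have "((\<lambda>l. R (l + - x)) has_integral integral {0..} R) {0 - - x..}"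
    using RA by (rule has_integral_shift_atLeast)
  then have minus_right: "((\<lambda>l. l ^ p * f (l - x)) has_integral integral {0..} R) {x..}"
    by (simp add: R_def)
  have "(Q has_integral JQ) {0..x}"
    unfolding JQ_def Q_def
    by (intro integrable_integral integrable_continuous_interval continuous_intros continuous_on_f)
  then have "((\<lambda>l. Q (0 + x - l)) has_integral JQ) {0..x}"
    by (rule has_integral_reflect_interval)
  moreover have "l ^ p * f (l - x) = l ^ p * (l - x) - Q (0 + x - l)" for l
  proof -
    have reflect: "f (l - x) = f (x - l) + (l - x)" using f_uminus[of "x - l"] by simp
    show ?thesis
      unfolding reflect Q_def using p by (simp add: power_minus_odd algebra_simps)
  qed
  ultimately have minus_left: "((\<lambda>l. l ^ p * f (l - x)) has_integral
      - (x ^ (p + 2) / ((real p + 1) * (real p + 2))) - JQ) {0..x}"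
    using has_integral_diff[OF has_integral_pow_mult_diff[OF x]] by simp
  from has_integral_diff[OF plus has_integral_Icc_atLeast_Un[OF minus_left minus_right x]]
  show ?thesis
    by (simp add: algebra_simps)
qed

definition H_poly :: "nat \<Rightarrow> real \<Rightarrow> real" where
  "H_poly k x = fact (2 * k + 1) *
     (\<Sum>i = 0..k + 1. theta (int i - 1) * x ^ (2 * k + 3 - 2 * i) / fact (2 * k + 3 - 2 * i))"

lemma H_poly_uminus: "H_poly k (- x) = - H_poly k x"
proof -
  have "odd (2 * k + 3 - 2 * i)" if "i \<in> {0..k + 1}" for i
    using that by presburger
  then have "(\<Sum>i = 0..k + 1. theta (int i - 1) * (- x) ^ (2 * k + 3 - 2 * i) / fact (2 * k + 3 - 2 * i))
      = (\<Sum>i = 0..k + 1. - (theta (int i - 1) * x ^ (2 * k + 3 - 2 * i) / fact (2 * k + 3 - 2 * i)))"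
    by (intro sum.cong) (simp_all add: power_minus_odd)
  then show ?thesis
    by (simp only: H_poly_def sum_negf mult_minus_right)
qed

lemma binomial_moment_difference:
  fixes k :: nat and x :: real
  defines "p \<equiv> 2 * k + 1"
  shows "(\<Sum>j\<le>p. of_nat (p choose j) * ((- x) ^ (p - j) - x ^ (p - j))
            * integral {0..} (\<lambda>u. u ^ j * f u))
       = fact p * (\<Sum>r<k + 1. theta (int r) * x ^ (p - 2 * r) / fact (p - 2 * r))"
proof -
  define T where "T j = of_nat (p choose j) * ((- x) ^ (p - j) - x ^ (p - j))
      * integral {0..} (\<lambda>u. u ^ j * f u)" for j
  have T_odd: "T (Suc (2 * r)) = 0" if "r < k + 1" for r
  proof -
    have "even (p - Suc (2 * r))" using that by (simp add: p_def)
    then show ?thesis by (simp add: T_def)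
  qed
  have T_even: "T (2 * r) = fact p * (theta (int r) * x ^ (p - 2 * r) / fact (p - 2 * r))" if "r < k + 1" for r
  proof -
    have "odd (p - 2 * r)" "2 * r \<le> p" using that by (auto simp: p_def)
    have "T (2 * r) = of_nat (p choose (2 * r)) * (- 2 * x ^ (p - 2 * r))
        * (- (2 ^ (2 * r + 2) * fact (2 * r) * eta (2 * r + 2)))"
      unfolding T_def integral_unique[OF has_integral_pow_mult_f(2)]
      using \<open>odd (p - 2 * r)\<close> by (simp add: power_minus_odd)
    also have "\<dots> = fact p * (theta (int r) * x ^ (p - 2 * r) / fact (p - 2 * r))"
      using binomial_fact[OF \<open>2 * r \<le> p\<close>, where 'a = real]
      by (simp add: theta_of_nat power_add field_simps)
    finally show ?thesis .
  qed
  have "(\<Sum>j\<le>p. T j) = (\<Sum>j<2 * (k + 1). if even j then T j else T j)"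
    by (simp add: p_def lessThan_Suc_atMost)
  also have "\<dots> = (\<Sum>r<k + 1. T (2 * r)) + (\<Sum>r<k + 1. T (2 * r + 1))"
    by (rule sum_split_even_odd)
  also have "\<dots> = (\<Sum>r<k + 1. fact p * (theta (int r) * x ^ (p - 2 * r) / fact (p - 2 * r)))"
    by (simp add: T_even T_odd)
  also have "\<dots> = fact p * (\<Sum>r<k + 1. theta (int r) * x ^ (p - 2 * r) / fact (p - 2 * r))"
    by (rule sum_distrib_left[symmetric])
  finally show ?thesis by (simp add: T_def)
qed

lemma H_poly_split:
  fixes k :: nat and x :: real
  defines "p \<equiv> 2 * k + 1"
  shows "H_poly k x = x ^ (p + 2) / ((real p + 1) * (real p + 2))
           + fact p * (\<Sum>r<k + 1. theta (int r) * x ^ (p - 2 * r) / fact (p - 2 * r))"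
proof -
  have "(\<Sum>i = 0..Suc k. theta (int i - 1) * x ^ (2 * k + 3 - 2 * i) / fact (2 * k + 3 - 2 * i))
      = theta (- 1) * x ^ (2 * k + 3) / fact (2 * k + 3)
        + (\<Sum>r = 0..k. theta (int (Suc r) - 1) * x ^ (2 * k + 3 - 2 * Suc r) / fact (2 * k + 3 - 2 * Suc r))"
    by (subst sum.atLeast0_atMost_Suc_shift) simp
  also have "\<dots> = x ^ (p + 2) / fact (p + 2)
      + (\<Sum>r<k + 1. theta (int r) * x ^ (p - 2 * r) / fact (p - 2 * r))"
    by (simp add: theta_minus_one p_def atLeast0AtMost lessThan_Suc_atMost numeral_3_eq_3)
  finally have "H_poly k x = fact p * (x ^ (p + 2) / fact (p + 2))
      + fact p * (\<Sum>r<k + 1. theta (int r) * x ^ (p - 2 * r) / fact (p - 2 * r))"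
    by (simp add: H_poly_def p_def distrib_left)
  moreover have "fact (p + 2) = (real p + 2) * (real p + 1) * fact p"
    by (simp add: numeral_2_eq_2 algebra_simps)
  ultimately show ?thesis by simp
qed

lemma has_integral_H_poly:
  fixes x :: real assumes "0 \<le> x"
  shows "((\<lambda>l. l ^ (2 * k + 1) * (f (l + x) - f (l - x))) has_integral H_poly k x) {0..}"
proof -
  define p where "p = 2 * k + 1"
  have "integral {0..} (\<lambda>u. (u + - x) ^ p * f u) - integral {0..} (\<lambda>u. (u + x) ^ p * f u)
      = (\<Sum>j\<le>p. of_nat (p choose j) * ((- x) ^ (p - j) - x ^ (p - j))
          * integral {0..} (\<lambda>u. u ^ j * f u))"
    by (simp only: integral_unique[OF has_integral_binomial_mult_f(2)] flip: sum_subtractf)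
      (simp add: algebra_simps)
  also have "\<dots> = fact p * (\<Sum>r<k + 1. theta (int r) * x ^ (p - 2 * r) / fact (p - 2 * r))"
    unfolding p_def by (rule binomial_moment_difference)
  finally show ?thesis
    using has_integral_odd_pow_mult_f_diff[of p x] assms
    by (simp add: H_poly_split p_def algebra_simps)
qed

theorem lemma5p3:
  fixes k :: nat and x :: real
  shows "((\<lambda>l. l ^ (2 * k + 1) * (f (l + x) - f (l - x))) has_integral
           (fact (2 * k + 1) * (\<Sum>i = 0..k + 1. theta (int i - 1) *
              x ^ (2 * k + 3 - 2 * i) / fact (2 * k + 3 - 2 * i)))) {0..}
         \<and> H k x = fact (2 * k + 1) * (\<Sum>i = 0..k + 1. theta (int i - 1) *
              x ^ (2 * k + 3 - 2 * i) / fact (2 * k + 3 - 2 * i))"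
proof -
  have "((\<lambda>l. l ^ (2 * k + 1) * (f (l + x) - f (l - x))) has_integral H_poly k x) {0..}"
  proof (cases "0 \<le> x")
    case False
    with has_integral_neg[OF has_integral_H_poly[of "- x" k]] show ?thesis
      by (simp add: H_poly_uminus algebra_simps)
  qed (rule has_integral_H_poly)
  then show ?thesis
    unfolding H_def H_poly_def by (simp add: integral_unique)
qed

end
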